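(* Let $\mathcal T$ be a good triangulation of $\mathcal C_G$ for an arbitrary multigraph $G=(V,E)$. Let $E_1,D\subseteq E$ be disjoint subsets such that the graph $(V,D)$ contains no cycle (in particular no loops), and for each $f\in D$ choose $p_f\in\{\overleftarrow e_f,\overrightarrow e_f\}$. Then there exists a unique maximal simplex $S\in\mathcal T$ with $\widetilde E(S)=E_1$, $D(S)=D$ and $p_f\in S$ for all $f\in D$. Moreover, every maximal simplex of $\mathcal T$ arises in this way (i.e. for every maximal $S\in\mathcal T$ the graph $(V,D(S))$ is acyclic).
   Context: For a finite undirected multigraph $G=(V,E)$ (loops, parallel edges and isolated nodes allowed) with $n=|V|$, $m=|E|$, work in $\mathbb{R}^V\times\mathbb{R}^E\cong\mathbb{R}^{n+m}$ with standard basis vectors $e_u$ ($u\in V$), $e_f$ ($f\in E$). Fix for each edge $f$ an ordering $(u,v)$ of its endpoints ($u=v$ for a loop) and set $\widetilde e_f=e_u+e_v-e_f$, $\overleftarrow e_f=e_u-e_v+e_f$, $\overrightarrow e_f=-e_u+e_v+e_f$ (so for a loop $\overleftarrow e_f=\overrightarrow e_f=e_f$). The cosmological polytope $\mathcal C_G$ is the convex hull of $\{e_f,\widetilde e_f,\overleftarrow e_f,\overrightarrow e_f: f\in E\}\cup\{e_u: u\in V\}$; these are exactly its lattice points, and it is an $(n+m-1)$-dimensional polytope in the hyperplane $\sum_i x_i=1$. A good triangulation of $\mathcal C_G$ is a regular triangulation (induced by a height function on the lattice points of $\mathcal C_G$) whose vertex set is the set of all lattice points of $\mathcal C_G$ and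 which contains the standard simplex $\mathrm{conv}\{e_u,e_f: u\in V, f\in E\}$ as a maximal cell; simplices are identified with their vertex sets. For a simplex $S\in\mathcal T$: the selected nodes are $V(S)=\{u\in V: e_u\in S\}$; the squiggly edges $\widetilde E(S)=\{f:\widetilde e_f\in S\}$; the selected edges $\widehat E(S)=\{f: e_f\in S\}$; for non-loop edges $f$, $f\in\overleftarrow E(S)$ iff $\overleftarrow e_f\in S$ and $f\in\overrightarrow E(S)$ iff $\overrightarrow e_f\in S$ (loops are never in $\overleftarrow E(S)\cup\overrightarrow E(S)$); the double edges are $D(S)=(\overleftarrow E(S)\cup\overrightarrow E(S))\cap\widehat E(S)$. *)

theory Defs
  imports Complex_Main
begin

text \<open>A multigraph: finite vertex set V, finite edge set E, and for every edge f a fixed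
  ordering (src f, tgt f) of its endpoints (src f = tgt f for a loop).\<close>

type_synonym ('v,'e) pt = "('v + 'e) \<Rightarrow> real"

definition unitv :: "('v + 'e) \<Rightarrow> ('v,'e) pt" where
  "unitv i = (\<lambda>j. if j = i then 1 else 0)"

definition eV :: "'v \<Rightarrow> ('v,'e) pt" where "eV u = unitv (Inl u)"
definition eE :: "'e \<Rightarrow> ('v,'e) pt" where "eE f = unitv (Inr f)"

definition eTil :: "('e \<Rightarrow> 'v) \<Rightarrow> ('e \<Rightarrow> 'v) \<Rightarrow> 'e \<Rightarrow> ('v,'e) pt" where
  "eTil src tgt f = (\<lambda>j. eV (src f) j + eV (tgt f) j - eE f j)"
definition eLeft :: "('e \<Rightarrow> 'v) \<Rightarrow> ('e \<Rightarrow> 'v) \<Rightarrow> 'e \<Rightarrow> ('v,'e) pt" where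
  "eLeft src tgt f = (\<lambda>j. eV (src f) j - eV (tgt f) j + eE f j)"
definition eRight :: "('e \<Rightarrow> 'v) \<Rightarrow> ('e \<Rightarrow> 'v) \<Rightarrow> 'e \<Rightarrow> ('v,'e) pt" where
  "eRight src tgt f = (\<lambda>j. - eV (src f) j + eV (tgt f) j + eE f j)"

definition cosmo_points :: "'v set \<Rightarrow> 'e set \<Rightarrow> ('e \<Rightarrow> 'v) \<Rightarrow> ('e \<Rightarrow> 'v) \<Rightarrow> ('v,'e) pt set" where
  "cosmo_points V E src tgt =
     eV ` V \<union> (\<Union>f\<in>E. {eE f, eTil src tgt f, eLeft src tgt f, eRight src tgt f})"

definition aff_indep :: "('v,'e) pt set \<Rightarrow> bool" where
  "aff_indep S \<longleftrightarrow> finite S \<and>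
     (\<forall>c :: ('v,'e) pt \<Rightarrow> real. (\<Sum>p\<in>S. c p) = 0 \<and> (\<forall>j. (\<Sum>p\<in>S. c p * p j) = 0)
        \<longrightarrow> (\<forall>p\<in>S. c p = 0))"

text \<open>Cells of the regular subdivision of the point configuration A induced by the height
  function h: the (vertex sets of the) lower faces of the lifted configuration, i.e. the sets
  of points where some affine functional lies below h on A with equality exactly there.\<close>
definition regular_subdivision ::
  "'v set \<Rightarrow> 'e set \<Rightarrow> ('v,'e) pt set \<Rightarrow> (('v,'e) pt \<Rightarrow> real) \<Rightarrow> ('v,'e) pt set set" where
  "regular_subdivision V E A h =
     {S. \<exists>(c :: ('v + 'e) \<Rightarrow> real) (d :: real).
            (\<forall>p\<in>A. (\<Sum>i\<in>Inl ` V \<union> Inr ` E. c i * p i) + d \<le> h p) \<and>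
            S = {p\<in>A. (\<Sum>i\<in>Inl ` V \<union> Inr ` E. c i * p i) + d = h p}}"

definition maximal_cell :: "'a set set \<Rightarrow> 'a set \<Rightarrow> bool" where
  "maximal_cell T S \<longleftrightarrow> S \<in> T \<and> \<not> (\<exists>S'\<in>T. S \<subset> S')"

text \<open>A good triangulation: regular triangulation (all cells simplices) using all lattice
  points as vertices, containing the standard simplex as a maximal cell.\<close>
definition good_triangulation ::
  "'v set \<Rightarrow> 'e set \<Rightarrow> ('e \<Rightarrow> 'v) \<Rightarrow> ('e \<Rightarrow> 'v) \<Rightarrow> ('v,'e) pt set set \<Rightarrow> bool" where
  "good_triangulation V E src tgt T \<longleftrightarrow>
     (\<exists>h. T = regular_subdivision V E (cosmo_points V E src tgt) h) \<and>
     (\<forall>S\<in>T. aff_indep S) \<and>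
     \<Union>T = cosmo_points V E src tgt \<and>
     maximal_cell T (eV ` V \<union> eE ` E)"

definition squiggly :: "'e set \<Rightarrow> ('e \<Rightarrow> 'v) \<Rightarrow> ('e \<Rightarrow> 'v) \<Rightarrow> ('v,'e) pt set \<Rightarrow> 'e set" where
  "squiggly E src tgt S = {f\<in>E. eTil src tgt f \<in> S}"
definition selected_edges :: "'e set \<Rightarrow> ('v,'e) pt set \<Rightarrow> 'e set" where
  "selected_edges E S = {f\<in>E. eE f \<in> S}"
definition left_edges :: "'e set \<Rightarrow> ('e \<Rightarrow> 'v) \<Rightarrow> ('e \<Rightarrow> 'v) \<Rightarrow> ('v,'e) pt set \<Rightarrow> 'e set" where
  "left_edges E src tgt S = {f\<in>E. src f \<noteq> tgt f \<and> eLeft src tgt f \<in> S}"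
definition right_edges :: "'e set \<Rightarrow> ('e \<Rightarrow> 'v) \<Rightarrow> ('e \<Rightarrow> 'v) \<Rightarrow> ('v,'e) pt set \<Rightarrow> 'e set" where
  "right_edges E src tgt S = {f\<in>E. src f \<noteq> tgt f \<and> eRight src tgt f \<in> S}"
definition double_edges :: "'e set \<Rightarrow> ('e \<Rightarrow> 'v) \<Rightarrow> ('e \<Rightarrow> 'v) \<Rightarrow> ('v,'e) pt set \<Rightarrow> 'e set" where
  "double_edges E src tgt S =
     (left_edges E src tgt S \<union> right_edges E src tgt S) \<inter> selected_edges E S"

text \<open>A cycle in the multigraph with edge set D: a closed walk v0 -e0- v1 -e1- ... -e(k-1)- v0
  with k \<ge> 1, pairwise distinct edges and pairwise distinct vertices (k = 1: a loop,
  k = 2: two parallel edges).\<close>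
definition has_cycle :: "('e \<Rightarrow> 'v) \<Rightarrow> ('e \<Rightarrow> 'v) \<Rightarrow> 'e set \<Rightarrow> bool" where
  "has_cycle src tgt D \<longleftrightarrow>
     (\<exists>es vs. es \<noteq> [] \<and> length vs = length es \<and> distinct es \<and> distinct vs \<and> set es \<subseteq> D \<and>
        (\<forall>i < length es. {src (es ! i), tgt (es ! i)} = {vs ! i, vs ! ((i + 1) mod length es)}))"

end

theory Submission
  imports Defs
begin

text \<open>Since all lattice points lie in the hyperplane of coordinate sum 1, the cells of the
  triangulation are the sets of points at which a linear form k is tight, k being admissible:
  bounded above by the height, measured from the affine functional supporting the standard
  simplex. A double edge together with its tight arrow point expresses the difference of the
  unit vectors at its ends as a multiple of (arrow point - eE f); summing along walks, affine
  independence shows that the double edges of a cell form a forest in which no two tight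
  vertices are connected. Maximality of a cell means that every linear form vanishing on it
  vanishes on all lattice points; this forces every edge to have a tight point and every
  component of the double-edge forest to contain a tight vertex. These data determine k,
  whence uniqueness. For existence, take as vertex values a potential on the forest D that
  makes the chosen arrow points tight, normalised to maximum 0 on each component, and give
  each edge the value making its squiggly point tight (f in E1) or the largest admissible
  value (otherwise).\<close>

definition pairing :: "('v + 'e) set \<Rightarrow> ('v + 'e \<Rightarrow> real) \<Rightarrow> ('v,'e) pt \<Rightarrow> real" where
  "pairing I k p = (\<Sum>i\<in>I. k i * p i)"

lemma pairing_unitv: "finite I \<Longrightarrow> pairing I k (unitv a) = (if a \<in> I then k a else 0)"
  unfolding pairing_def unitv_def by (simp add: if_distrib cong: if_cong)

lemma pairing_add: "pairing I k (\<lambda>j. x j + y j) = pairing I k x + pairing I k y"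
  unfolding pairing_def by (simp add: distrib_left sum.distrib)

lemma pairing_diff: "pairing I k (\<lambda>j. x j - y j) = pairing I k x - pairing I k y"
  unfolding pairing_def by (simp add: right_diff_distrib sum_subtractf)

lemma pairing_uminus: "pairing I k (\<lambda>j. - x j) = - pairing I k x"
  unfolding pairing_def by (simp add: sum_negf)

lemma pairing_add_scaled_form: "pairing I (\<lambda>i. k i + a * z i) p = pairing I k p + a * pairing I z p"
  unfolding pairing_def by (simp add: algebra_simps sum.distrib sum_distrib_left)

lemma pairing_uminus_form: "pairing I (\<lambda>i. - z i) p = - pairing I z p"
  unfolding pairing_def by (simp add: sum_negf)

lemma pairing_cong: "(\<And>i. i \<in> I \<Longrightarrow> k i = k' i) \<Longrightarrow> pairing I k p = pairing I k' p"
  unfolding pairing_def by simp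

lemma eV_apply: "eV u j = (if j = Inl u then 1 else 0)"
  by (simp add: eV_def unitv_def)

lemma eE_apply: "eE f j = (if j = Inr f then 1 else 0)"
  by (simp add: eE_def unitv_def)

lemma eLeft_loop: "src f = tgt f \<Longrightarrow> eLeft src tgt f = eE f"
  by (simp add: eLeft_def)

lemma eV_nonneg: "0 \<le> eV u j"
  by (simp add: eV_apply)

lemma eE_nonneg: "0 \<le> eE f j"
  by (simp add: eE_apply)

lemma eLeft_tgt_coord: "src f \<noteq> tgt f \<Longrightarrow> eLeft src tgt f (Inl (tgt f)) = -1"
  by (simp add: eLeft_def eV_apply eE_apply)

lemma eRight_src_coord: "src f \<noteq> tgt f \<Longrightarrow> eRight src tgt f (Inl (src f)) = -1"
  by (simp add: eRight_def eV_apply eE_apply)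

lemma eTil_edge_coord: "eTil src tgt f (Inr f) = -1"
  by (simp add: eTil_def eV_apply eE_apply)

lemma eV_inject: "eV u = eV w \<longleftrightarrow> u = w"
  by (metis eV_apply sum.inject(1) zero_neq_one)

lemma eE_inject: "eE f = eE g \<longleftrightarrow> f = g"
  by (metis eE_apply sum.inject(2) zero_neq_one)

lemma eV_neq_eE: "eV u \<noteq> eE f"
  by (metis eE_apply eV_apply sum.distinct(1) zero_neq_one)

lemma eLeft_neq_unit:
  assumes "src f \<noteq> tgt f" shows "eV u \<noteq> eLeft src tgt f" "eE g \<noteq> eLeft src tgt f"
  using eLeft_tgt_coord[of src f tgt, OF assms] eV_nonneg[of u "Inl (tgt f)"] eE_nonneg[of g "Inl (tgt f)"]
  by (metis neg_0_le_iff_le not_one_le_zero)+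

lemma eRight_neq_unit:
  assumes "src f \<noteq> tgt f" shows "eV u \<noteq> eRight src tgt f" "eE g \<noteq> eRight src tgt f"
  using eRight_src_coord[of src f tgt, OF assms] eV_nonneg[of u "Inl (src f)"] eE_nonneg[of g "Inl (src f)"]
  by (metis neg_0_le_iff_le not_one_le_zero)+

lemma double_edgesD:
  "f \<in> double_edges E src tgt S \<Longrightarrow>
     f \<in> E \<and> src f \<noteq> tgt f \<and> eE f \<in> S \<and> (eLeft src tgt f \<in> S \<or> eRight src tgt f \<in> S)"
  unfolding double_edges_def left_edges_def right_edges_def selected_edges_def by auto

lemma double_edgesI:
  "f \<in> E \<Longrightarrow> src f \<noteq> tgt f \<Longrightarrow> eE f \<in> S \<Longrightarrow> eLeft src tgt f \<in> S \<or> eRight src tgt f \<in> S \<Longrightarrow>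
     f \<in> double_edges E src tgt S"
  unfolding double_edges_def left_edges_def right_edges_def selected_edges_def by auto

section \<open>Walks and forests in a multigraph\<close>

definition adjacent :: "('e \<Rightarrow> 'v) \<Rightarrow> ('e \<Rightarrow> 'v) \<Rightarrow> 'e set \<Rightarrow> 'v \<Rightarrow> 'v \<Rightarrow> bool" where
  "adjacent src tgt D x y \<longleftrightarrow> (\<exists>f\<in>D. {src f, tgt f} = {x, y})"

abbreviation reachable :: "('e \<Rightarrow> 'v) \<Rightarrow> ('e \<Rightarrow> 'v) \<Rightarrow> 'e set \<Rightarrow> 'v \<Rightarrow> 'v \<Rightarrow> bool" where
  "reachable src tgt D \<equiv> (adjacent src tgt D)\<^sup>*\<^sup>*"

lemma symp_adjacent: "symp (adjacent src tgt D)"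
  unfolding adjacent_def symp_def by blast

lemma reachable_sym: "reachable src tgt D x y \<Longrightarrow> reachable src tgt D y x"
  by (rule sympD[OF symp_rtranclp[OF symp_adjacent]])

lemma reachable_edge: "f \<in> D \<Longrightarrow> reachable src tgt D (src f) (tgt f)"
  by (rule r_into_rtranclp) (auto simp: adjacent_def)

lemma reachable_via_edge_iff:
  "f \<in> D \<Longrightarrow> reachable src tgt D w (src f) \<longleftrightarrow> reachable src tgt D w (tgt f)"
  by (meson reachable_edge reachable_sym rtranclp_trans)

lemma reachable_mono: "D \<subseteq> D' \<Longrightarrow> reachable src tgt D x y \<Longrightarrow> reachable src tgt D' x y"
  by (erule rtranclp_mono[THEN predicate2D, rotated]) (simp add: adjacent_def le_fun_def, blast)

lemma reachable_const:
  assumes "\<forall>f\<in>D. g (src f) = g (tgt f)" "reachable src tgt D x y"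
  shows "g x = g y"
  using assms(2) by induction (use assms(1) in \<open>auto simp: adjacent_def doubleton_eq_iff\<close>)

lemma reachable_closed:
  assumes "\<forall>f\<in>D. src f \<in> V \<and> tgt f \<in> V" "reachable src tgt D x y" "x \<in> V"
  shows "y \<in> V"
  using assms(2,3) by induction (use assms(1) in \<open>auto simp: adjacent_def doubleton_eq_iff\<close>)

definition walk :: "('e \<Rightarrow> 'v) \<Rightarrow> ('e \<Rightarrow> 'v) \<Rightarrow> 'e set \<Rightarrow> 'v list \<Rightarrow> 'e list \<Rightarrow> bool" where
  "walk src tgt D vs es \<longleftrightarrow> length vs = length es + 1 \<and> set es \<subseteq> D \<and>
     (\<forall>i < length es. {src (es ! i), tgt (es ! i)} = {vs ! i, vs ! Suc i})"

lemma walk_Cons: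
  "walk src tgt D (v # vs) (g # es) \<longleftrightarrow>
     g \<in> D \<and> {src g, tgt g} = {v, vs ! 0} \<and> walk src tgt D vs es"
  unfolding walk_def by (auto simp: All_less_Suc2)

lemma walk_take:
  "walk src tgt D vs es \<Longrightarrow> j < length vs \<Longrightarrow> walk src tgt D (take (Suc j) vs) (take j es)"
  unfolding walk_def by (auto dest: in_set_takeD)

lemma walk_snoc:
  "walk src tgt D vs es \<Longrightarrow> g \<in> D \<Longrightarrow> {src g, tgt g} = {vs ! length es, z} \<Longrightarrow>
     walk src tgt D (vs @ [z]) (es @ [g])"
  unfolding walk_def by (auto simp: nth_append less_Suc_eq)

lemma reachable_imp_path:
  assumes "reachable src tgt D x y"
  obtains vs es where "walk src tgt D vs es" "vs ! 0 = x" "vs ! length es = y"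
    "distinct vs" "distinct es"
proof -
  from assms have "\<exists>vs es. walk src tgt D vs es \<and> vs ! 0 = x \<and> vs ! length es = y \<and>
      distinct vs \<and> distinct es"
  proof induction
    case base
    show ?case by (rule exI[of _ "[x]"], rule exI[of _ "[]"]) (simp add: walk_def)
  next
    case (step y z)
    then obtain vs es where W: "walk src tgt D vs es" "vs ! 0 = x" "vs ! length es = y"
      "distinct vs" "distinct es" by blast
    from step(2) obtain g where g: "g \<in> D" "{src g, tgt g} = {y, z}" by (auto simp: adjacent_def)
    show ?case
    proof (cases "z \<in> set vs")
      case True
      then obtain j where j: "j < length vs" "vs ! j = z" by (auto simp: in_set_conv_nth)
      then show ?thesis using W walk_take[OF W(1) j(1)]
        by (intro exI[of _ "take (Suc j) vs"] exI[of _ "take j es"]) (auto simp: walk_def)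
    next
      case False
      have "g \<notin> set es"
      proof
        assume "g \<in> set es"
        then obtain i where "i < length es" "es ! i = g" by (auto simp: in_set_conv_nth)
        then have "z \<in> {vs ! i, vs ! Suc i}" "Suc i < length vs"
          using W(1) g(2) by (auto simp: walk_def)
        with False show False by auto
      qed
      then show ?thesis using W walk_snoc[OF W(1) g(1)] g(2) False
        by (intro exI[of _ "vs @ [z]"] exI[of _ "es @ [g]"]) (auto simp: walk_def nth_append)
    qed
  qed
  then show ?thesis using that by blast
qed

lemma has_cycle_mono: "D \<subseteq> D' \<Longrightarrow> has_cycle src tgt D \<Longrightarrow> has_cycle src tgt D'"
  unfolding has_cycle_def by blast

lemma acyclic_no_loop: "\<not> has_cycle src tgt D \<Longrightarrow> f \<in> D \<Longrightarrow> src f \<noteq> tgt f"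
  unfolding has_cycle_def
  by (rule notI, erule notE, rule exI[of _ "[f]"], rule exI[of _ "[src f]"]) auto

lemma has_cycle_closed_walk:
  assumes "has_cycle src tgt D"
  obtains vs es where "walk src tgt D vs es" "es \<noteq> []" "distinct es" "vs ! length es = vs ! 0"
proof -
  obtain es vs where C: "es \<noteq> []" "length vs = length es" "distinct es" "set es \<subseteq> D"
    "\<forall>i < length es. {src (es ! i), tgt (es ! i)} = {vs ! i, vs ! ((i + 1) mod length es)}"
    using assms unfolding has_cycle_def by blast
  have "walk src tgt D (vs @ [vs ! 0]) es"
    unfolding walk_def
  proof (intro conjI allI impI)
    fix i assume "i < length es"
    then consider "Suc i < length es" | "Suc i = length es" by linarith
    then show "{src (es ! i), tgt (es ! i)} = {(vs @ [vs ! 0]) ! i, (vs @ [vs ! 0]) ! Suc i}"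
      using C(2,5) \<open>i < length es\<close> by cases (auto simp: nth_append)
  qed (use C in auto)
  then show ?thesis using that C(1-3) by (simp add: nth_append)
qed

lemma has_cycle_insert:
  assumes "f \<notin> D" "reachable src tgt D (tgt f) (src f)"
  shows "has_cycle src tgt (insert f D)"
proof -
  obtain vs es where W: "walk src tgt D vs es" "vs ! 0 = tgt f" "vs ! length es = src f"
    "distinct vs" "distinct es"
    using reachable_imp_path[OF assms(2)] by blast
  show ?thesis unfolding has_cycle_def
  proof (intro exI[of _ "es @ [f]"] exI[of _ vs] conjI allI impI)
    fix i assume "i < length (es @ [f])"
    then consider "i < length es" | "i = length es" by fastforce
    then show "{src ((es @ [f]) ! i), tgt ((es @ [f]) ! i)} =
        {vs ! i, vs ! ((i + 1) mod length (es @ [f]))}"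
      using W(1-3) by cases (auto simp: walk_def nth_append)
  qed (use W assms(1) in \<open>auto simp: walk_def\<close>)
qed

text \<open>Adding the edges one by one, each new edge joins two different components, one of
  which is shifted to fit the new edge.\<close>
lemma acyclic_potential:
  fixes w :: "'e \<Rightarrow> real"
  assumes "finite D" "\<not> has_cycle src tgt D"
  obtains P :: "'v \<Rightarrow> real" where "\<forall>f\<in>D. P (src f) - P (tgt f) = w f"
proof -
  from assms have "\<exists>P::'v \<Rightarrow> real. \<forall>f\<in>D. P (src f) - P (tgt f) = w f"
  proof (induction D rule: finite_induct)
    case empty then show ?case by simp
  next
    case (insert f D)
    then obtain P where P: "\<forall>g\<in>D. P (src g) - P (tgt g) = w g"
      using has_cycle_mono[of D "insert f D"] by blast
    have apart: "\<not> reachable src tgt D (tgt f) (src f)"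
      using has_cycle_insert[OF insert(2)] insert(4) by blast
    define P' where
      "P' x = P x + (if reachable src tgt D (tgt f) x then P (src f) - P (tgt f) - w f else 0)" for x
    have "P' (src g) - P' (tgt g) = w g" if "g \<in> insert f D" for g
    proof (cases "g = f")
      case True then show ?thesis using apart by (simp add: P'_def)
    next
      case False
      then have "g \<in> D" using that by simp
      then show ?thesis using P reachable_via_edge_iff[of g D src tgt "tgt f"] by (simp add: P'_def)
    qed
    then show ?case by blast
  qed
  then show ?thesis using that by blast
qed

text \<open>Subtracting from the potential its maximum over each component.\<close>
lemma acyclic_normalized_potential:
  fixes w :: "'e \<Rightarrow> real"
  assumes "finite V" "finite D" "\<not> has_cycle src tgt D" "\<forall>f\<in>D. src f \<in> V \<and> tgt f \<in> V"
  obtains \<alpha> :: "'v \<Rightarrow> real" where "\<forall>f\<in>D. \<alpha> (src f) - \<alpha> (tgt f) = w f" "\<forall>x\<in>V. \<alpha> x \<le> 0"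
    "\<forall>x\<in>V. \<exists>u\<in>V. reachable src tgt D x u \<and> \<alpha> u = 0"
proof -
  obtain P where P: "\<forall>f\<in>D. P (src f) - P (tgt f) = w f"
    using acyclic_potential[OF assms(2,3)] by blast
  define M where "M x = Max (P ` {z\<in>V. reachable src tgt D x z})" for x
  have M_eq: "M x = M y" if "reachable src tgt D x y" for x y
  proof -
    have "{z\<in>V. reachable src tgt D x z} = {z\<in>V. reachable src tgt D y z}"
      using that reachable_sym[OF that] by (auto intro: rtranclp_trans)
    then show ?thesis by (simp add: M_def)
  qed
  have fin: "finite {z\<in>V. reachable src tgt D x z}" for x using assms(1) by simp
  have root: "\<exists>u\<in>V. reachable src tgt D x u \<and> P u - M u = 0" if "x \<in> V" for x
  proof -
    have "M x \<in> P ` {z\<in>V. reachable src tgt D x z}"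
      unfolding M_def using fin that by (intro Max_in) auto
    then obtain u where "u \<in> V" "reachable src tgt D x u" "P u = M x" by auto
    then show ?thesis using M_eq by auto
  qed
  show ?thesis
  proof (rule that[of "\<lambda>x. P x - M x"])
    show "\<forall>f\<in>D. P (src f) - M (src f) - (P (tgt f) - M (tgt f)) = w f"
      using P M_eq[OF reachable_edge] by simp
    show "\<forall>x\<in>V. P x - M x \<le> 0"
      using fin by (auto simp: M_def)
  qed (use root in blast)
qed

section \<open>Affine dependences along double edges\<close>

lemma sums_move_coefficient:
  fixes c :: "'a \<Rightarrow> real" and a :: real and x :: "'a \<Rightarrow> 'b \<Rightarrow> real"
  assumes "finite S" "q \<in> S" "r \<in> S"
  defines "c' \<equiv> \<lambda>p. c p + a * (of_bool (p = q) - of_bool (p = r))"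
  shows "(\<Sum>p\<in>S. c' p) = (\<Sum>p\<in>S. c p)"
    and "(\<Sum>p\<in>S. c' p * x p j) = (\<Sum>p\<in>S. c p * x p j) + a * (x q j - x r j)"
proof -
  have pick: "(\<Sum>p\<in>S. of_bool (p = y) * F p) = F y" if "y \<in> S" for y and F :: "'a \<Rightarrow> real"
  proof -
    have "(\<Sum>p\<in>S. of_bool (p = y) * F p) = (\<Sum>p\<in>S. if p = y then F p else 0)"
      by (rule sum.cong) auto
    then show ?thesis using assms(1) that by simp
  qed
  have expand: "(\<Sum>p\<in>S. c' p * F p) = (\<Sum>p\<in>S. c p * F p)
      + a * ((\<Sum>p\<in>S. of_bool (p = q) * F p) - (\<Sum>p\<in>S. of_bool (p = r) * F p))" for F :: "'a \<Rightarrow> real"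
    by (simp add: c'_def algebra_simps sum.distrib sum_subtractf sum_distrib_left)
  show "(\<Sum>p\<in>S. c' p) = (\<Sum>p\<in>S. c p)"
    using expand[of "\<lambda>_. 1"] pick[of q "\<lambda>_. 1"] pick[of r "\<lambda>_. 1"] assms(2,3) by simp
  show "(\<Sum>p\<in>S. c' p * x p j) = (\<Sum>p\<in>S. c p * x p j) + a * (x q j - x r j)"
    using expand[of "\<lambda>p. x p j"] pick assms(2,3) by simp
qed

lemma double_edge_arrow:
  assumes g: "g \<in> double_edges E src tgt S" and ends: "{src g, tgt g} = {v, v'}"
  obtains q and \<sigma> :: real where "q \<in> S" "\<And>u. eV u \<noteq> q" "\<And>f. eE f \<noteq> q" "\<sigma> \<noteq> 0"
    "\<And>j. \<sigma> * (q j - eE g j) = eV v j - eV v' j"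
proof
  note gD = double_edgesD[OF g]
  define q where "q = (if eLeft src tgt g \<in> S then eLeft src tgt g else eRight src tgt g)"
  show "q \<in> S" using gD by (auto simp: q_def)
  show "eV u \<noteq> q" "eE f \<noteq> q" for u f
    using gD eLeft_neq_unit[of src g tgt] eRight_neq_unit[of src g tgt] by (auto simp: q_def)
  show "(if q = eLeft src tgt g \<longleftrightarrow> src g = v then 1 else -1 :: real) \<noteq> 0" by simp
  have "src g = v \<and> tgt g = v' \<or> src g = v' \<and> tgt g = v"
    using ends by (auto simp: doubleton_eq_iff)
  then show "(if q = eLeft src tgt g \<longleftrightarrow> src g = v then 1 else -1) * (q j - eE g j) = eV v j - eV v' j"
    for j using gD by (auto simp: q_def eLeft_def eRight_def)
qed

text \<open>Along a walk in the double edges of S, each edge contributes the difference of its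
  tight arrow point and eE f, which equals the difference of the unit vectors at its ends.\<close>
lemma walk_affine_dependence:
  assumes "finite S" "walk src tgt (double_edges E src tgt S) vs es"
  shows "\<exists>c. (\<Sum>p\<in>S. c p) = 0 \<and> (\<forall>j. (\<Sum>p\<in>S. c p * p j) = eV (vs ! 0) j - eV (vs ! length es) j)
     \<and> (\<forall>u. c (eV u) = 0) \<and> (\<forall>f. f \<notin> set es \<longrightarrow> c (eE f) = 0)
     \<and> (distinct es \<and> es \<noteq> [] \<longrightarrow> c (eE (es ! 0)) \<noteq> 0)"
  using assms(2)
proof (induction es arbitrary: vs)
  case Nil
  then obtain v where "vs = [v]" by (cases vs) (auto simp: walk_def)
  then show ?case by (intro exI[of _ "\<lambda>_. 0"]) simp
next
  case (Cons g es)
  then obtain v vs' where vs: "vs = v # vs'" by (cases vs) (auto simp: walk_def)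
  with Cons.prems have g: "g \<in> double_edges E src tgt S" "{src g, tgt g} = {v, vs' ! 0}"
    and W: "walk src tgt (double_edges E src tgt S) vs' es" by (simp_all add: walk_Cons)
  obtain c where c: "(\<Sum>p\<in>S. c p) = 0" "\<forall>j. (\<Sum>p\<in>S. c p * p j) = eV (vs' ! 0) j - eV (vs' ! length es) j"
     "\<forall>u. c (eV u) = 0" "\<forall>f. f \<notin> set es \<longrightarrow> c (eE f) = 0"
    using Cons.IH[OF W] by blast
  obtain q \<sigma> where q: "q \<in> S" "\<And>u. eV u \<noteq> q" "\<And>f. eE f \<noteq> q" "\<sigma> \<noteq> 0"
    "\<And>j. \<sigma> * (q j - eE g j) = eV v j - eV (vs' ! 0) j"
    using double_edge_arrow[OF g] by blast
  define c' where "c' p = c p + \<sigma> * (of_bool (p = q) - of_bool (p = eE g))" for p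
  have "eE g \<in> S" using double_edgesD[OF g(1)] by blast
  note move = sums_move_coefficient[OF assms(1) q(1) this, of c \<sigma>, folded c'_def]
  show ?case
  proof (intro exI[of _ c'] conjI allI impI)
    show "(\<Sum>p\<in>S. c' p) = 0" using move(1) c(1) by simp
    show "(\<Sum>p\<in>S. c' p * p j) = eV (vs ! 0) j - eV (vs ! length (g # es)) j" for j
      using move(2)[of "\<lambda>p. p"] c(2) q(5) vs by simp
    show "c' (eV u) = 0" for u using c(3) by (simp add: c'_def q(2) eV_neq_eE)
    show "c' (eE f) = 0" if "f \<notin> set (g # es)" for f
      using that c(4) by (simp add: c'_def q(3) eE_inject)
    show "c' (eE ((g # es) ! 0)) \<noteq> 0" if "distinct (g # es) \<and> g # es \<noteq> []"
      using that c(4) q(4) by (simp add: c'_def q(3))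
  qed
qed

section \<open>Heights and admissible linear forms\<close>

locale good_height =
  fixes V :: "'v set" and E :: "'e set" and src tgt :: "'e \<Rightarrow> 'v"
    and h :: "('v,'e) pt \<Rightarrow> real" and c0 :: "'v + 'e \<Rightarrow> real" and d0 :: real
  assumes finite_V: "finite V" and finite_E: "finite E"
    and ends_in_V: "\<And>f. f \<in> E \<Longrightarrow> src f \<in> V \<and> tgt f \<in> V"
    and standard_below:
      "\<And>p. p \<in> cosmo_points V E src tgt \<Longrightarrow> pairing (Inl ` V \<union> Inr ` E) c0 p + d0 \<le> h p"
    and standard_cell: "eV ` V \<union> eE ` E =
      {p \<in> cosmo_points V E src tgt. pairing (Inl ` V \<union> Inr ` E) c0 p + d0 = h p}"
    and cells_aff_indep:
      "\<And>S. S \<in> regular_subdivision V E (cosmo_points V E src tgt) h \<Longrightarrow> aff_indep S"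
begin

abbreviation "points \<equiv> cosmo_points V E src tgt"
abbreviation "coords \<equiv> Inl ` V \<union> Inr ` E"
abbreviation "cells \<equiv> regular_subdivision V E points h"
abbreviation "til \<equiv> eTil src tgt"
abbreviation "lft \<equiv> eLeft src tgt"
abbreviation "rgt \<equiv> eRight src tgt"

definition gap :: "('v,'e) pt \<Rightarrow> real" where
  "gap p = h p - pairing coords c0 p - d0"

definition admissible :: "('v + 'e \<Rightarrow> real) \<Rightarrow> bool" where
  "admissible k \<longleftrightarrow> (\<forall>p\<in>points. pairing coords k p \<le> gap p)"

definition tight :: "('v + 'e \<Rightarrow> real) \<Rightarrow> ('v,'e) pt set" where
  "tight k = {p\<in>points. pairing coords k p = gap p}"

lemma finite_coords: "finite coords"
  using finite_V finite_E by simp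

lemma finite_points: "finite points"
  unfolding cosmo_points_def using finite_V finite_E by auto

lemma points_cases:
  assumes "p \<in> points"
  obtains u where "u \<in> V" "p = eV u"
  | f where "f \<in> E" "p = eE f" | f where "f \<in> E" "p = til f"
  | f where "f \<in> E" "p = lft f" | f where "f \<in> E" "p = rgt f"
  using assms unfolding cosmo_points_def by blast

lemma in_points:
  "u \<in> V \<Longrightarrow> eV u \<in> points" "f \<in> E \<Longrightarrow> eE f \<in> points" "f \<in> E \<Longrightarrow> til f \<in> points"
  "f \<in> E \<Longrightarrow> lft f \<in> points" "f \<in> E \<Longrightarrow> rgt f \<in> points"
  unfolding cosmo_points_def by auto

lemma pairing_eV: "u \<in> V \<Longrightarrow> pairing coords k (eV u) = k (Inl u)"
  unfolding eV_def using finite_coords by (simp add: pairing_unitv)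

lemma pairing_eE: "f \<in> E \<Longrightarrow> pairing coords k (eE f) = k (Inr f)"
  unfolding eE_def using finite_coords by (simp add: pairing_unitv)

lemma pairing_eTil:
  "f \<in> E \<Longrightarrow> pairing coords k (til f) = k (Inl (src f)) + k (Inl (tgt f)) - k (Inr f)"
  unfolding eTil_def using ends_in_V[of f] by (simp add: pairing_add pairing_diff pairing_eV pairing_eE)

lemma pairing_eLeft:
  "f \<in> E \<Longrightarrow> pairing coords k (lft f) = k (Inl (src f)) - k (Inl (tgt f)) + k (Inr f)"
  unfolding eLeft_def using ends_in_V[of f] by (simp add: pairing_add pairing_diff pairing_eV pairing_eE)

lemma pairing_eRight:
  "f \<in> E \<Longrightarrow> pairing coords k (rgt f) = - k (Inl (src f)) + k (Inl (tgt f)) + k (Inr f)"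
  unfolding eRight_def using ends_in_V[of f]
  by (simp add: pairing_add pairing_diff pairing_uminus pairing_eV pairing_eE)

lemmas pairing_points = pairing_eV pairing_eE pairing_eTil pairing_eLeft pairing_eRight

lemma pairing_add_const: "p \<in> points \<Longrightarrow> pairing coords (\<lambda>i. c i + d) p = pairing coords c p + d"
proof -
  assume "p \<in> points"
  then have "pairing coords (\<lambda>_. 1) p = 1" by (cases rule: points_cases) (simp_all add: pairing_points)
  then show ?thesis using pairing_add_scaled_form[of coords c d "\<lambda>_. 1" p] by simp
qed

lemma cells_eq: "cells = {tight k | k. admissible k}"
proof (intro set_eqI iffI)
  fix S assume "S \<in> cells"
  then obtain c d where cd: "\<forall>p\<in>points. pairing coords c p + d \<le> h p"
    "S = {p\<in>points. pairing coords c p + d = h p}"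
    unfolding regular_subdivision_def pairing_def by blast
  define k where "k i = c i + (d - d0) + (-1) * c0 i" for i
  have "pairing coords k p = pairing coords c p + d - pairing coords c0 p - d0" if "p \<in> points" for p
    unfolding k_def pairing_add_scaled_form using pairing_add_const[OF that] by simp
  then have "admissible k" "S = tight k" using cd by (auto simp: admissible_def tight_def gap_def)
  then show "S \<in> {tight k | k. admissible k}" by blast
next
  fix S assume "S \<in> {tight k | k. admissible k}"
  then obtain k where k: "admissible k" "S = tight k" by blast
  define c where "c i = k i + d0 + 1 * c0 i" for i
  have "pairing coords c p = pairing coords k p + pairing coords c0 p + d0" if "p \<in> points" for p
    unfolding c_def pairing_add_scaled_form using pairing_add_const[OF that] by simp
  then show "S \<in> cells"
    unfolding regular_subdivision_def using k
    by (intro CollectI exI[of _ c] exI[of _ 0]) (auto simp: admissible_def tight_def gap_def pairing_def)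
qed

lemma gap_nonneg: "p \<in> points \<Longrightarrow> 0 \<le> gap p"
  using standard_below[of p] by (simp add: gap_def)

lemma gap_standard: "u \<in> V \<Longrightarrow> gap (eV u) = 0" "f \<in> E \<Longrightarrow> gap (eE f) = 0"
proof -
  have "gap p = 0" if "p \<in> eV ` V \<union> eE ` E" for p
    using standard_cell that by (auto simp: gap_def)
  then show "u \<in> V \<Longrightarrow> gap (eV u) = 0" "f \<in> E \<Longrightarrow> gap (eE f) = 0" by auto
qed

lemma gap_pos: "p \<in> points \<Longrightarrow> p \<notin> eV ` V \<union> eE ` E \<Longrightarrow> 0 < gap p"
  using standard_below[of p] standard_cell by (force simp: gap_def)

lemma gap_pos_if_negative_coord: "p \<in> points \<Longrightarrow> p j < 0 \<Longrightarrow> 0 < gap p"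
  by (rule gap_pos) (auto simp: eV_apply eE_apply split: if_splits)

lemma gap_eTil_pos: "f \<in> E \<Longrightarrow> 0 < gap (til f)"
  using gap_pos_if_negative_coord[OF in_points(3), of f "Inr f"] eTil_edge_coord[of src tgt f] by simp

lemma gap_eLeft_pos: "f \<in> E \<Longrightarrow> src f \<noteq> tgt f \<Longrightarrow> 0 < gap (lft f)"
  using gap_pos_if_negative_coord[OF in_points(4), of f "Inl (tgt f)"] eLeft_tgt_coord[of src f tgt] by simp

lemma gap_eRight_pos: "f \<in> E \<Longrightarrow> src f \<noteq> tgt f \<Longrightarrow> 0 < gap (rgt f)"
  using gap_pos_if_negative_coord[OF in_points(5), of f "Inl (src f)"] eRight_src_coord[of src f tgt] by simp

lemma admissible_iff:
  "admissible k \<longleftrightarrow> (\<forall>u\<in>V. k (Inl u) \<le> 0) \<and>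
     (\<forall>f\<in>E. k (Inr f) \<le> 0 \<and> k (Inl (src f)) + k (Inl (tgt f)) - k (Inr f) \<le> gap (til f) \<and>
        k (Inl (src f)) - k (Inl (tgt f)) + k (Inr f) \<le> gap (lft f) \<and>
        - k (Inl (src f)) + k (Inl (tgt f)) + k (Inr f) \<le> gap (rgt f))"
  (is "_ \<longleftrightarrow> ?rhs")
proof
  assume "admissible k"
  then have "pairing coords k p \<le> gap p" if "p \<in> points" for p
    using that by (simp add: admissible_def)
  from this[OF in_points(1)] this[OF in_points(2)] this[OF in_points(3)] this[OF in_points(4)]
    this[OF in_points(5)]
  show "?rhs" by (simp add: pairing_points gap_standard)
qed (auto simp: admissible_def pairing_points gap_standard elim!: points_cases)

lemma in_tight_iff:
  "u \<in> V \<Longrightarrow> eV u \<in> tight k \<longleftrightarrow> k (Inl u) = 0"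
  "f \<in> E \<Longrightarrow> eE f \<in> tight k \<longleftrightarrow> k (Inr f) = 0"
  "f \<in> E \<Longrightarrow> til f \<in> tight k \<longleftrightarrow> k (Inl (src f)) + k (Inl (tgt f)) - k (Inr f) = gap (til f)"
  "f \<in> E \<Longrightarrow> lft f \<in> tight k \<longleftrightarrow> k (Inl (src f)) - k (Inl (tgt f)) + k (Inr f) = gap (lft f)"
  "f \<in> E \<Longrightarrow> rgt f \<in> tight k \<longleftrightarrow> - k (Inl (src f)) + k (Inl (tgt f)) + k (Inr f) = gap (rgt f)"
  by (simp_all add: tight_def in_points pairing_points gap_standard)

lemma tight_subset_points: "tight k \<subseteq> points"
  by (simp add: tight_def)

lemma tight_exclusions:
  assumes "admissible k" "f \<in> E"
  shows "eE f \<in> tight k \<Longrightarrow> til f \<notin> tight k"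
    and "lft f \<in> tight k \<Longrightarrow> til f \<notin> tight k"
    and "rgt f \<in> tight k \<Longrightarrow> til f \<notin> tight k"
    and "src f \<noteq> tgt f \<Longrightarrow> lft f \<in> tight k \<Longrightarrow> rgt f \<notin> tight k"
proof -
  have "k (Inl (src f)) \<le> 0" "k (Inl (tgt f)) \<le> 0" "k (Inr f) \<le> 0"
    "k (Inl (src f)) - k (Inl (tgt f)) + k (Inr f) \<le> gap (lft f)"
    "- k (Inl (src f)) + k (Inl (tgt f)) + k (Inr f) \<le> gap (rgt f)"
    using assms ends_in_V[OF assms(2)] by (auto simp: admissible_iff)
  then show "eE f \<in> tight k \<Longrightarrow> til f \<notin> tight k"
    and "lft f \<in> tight k \<Longrightarrow> til f \<notin> tight k"
    and "rgt f \<in> tight k \<Longrightarrow> til f \<notin> tight k"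
    and "src f \<noteq> tgt f \<Longrightarrow> lft f \<in> tight k \<Longrightarrow> rgt f \<notin> tight k"
    using assms(2) gap_eTil_pos[OF assms(2)] gap_eLeft_pos[OF assms(2)] gap_eRight_pos[OF assms(2)]
      gap_nonneg[OF in_points(4)[OF assms(2)]] gap_nonneg[OF in_points(5)[OF assms(2)]]
    by (auto simp: in_tight_iff)
qed

lemma edge_coord_eq_min:
  assumes "admissible k" "f \<in> E" "eE f \<in> tight k \<or> lft f \<in> tight k \<or> rgt f \<in> tight k"
  shows "k (Inr f) = min 0 (min (gap (lft f) - (k (Inl (src f)) - k (Inl (tgt f))))
                              (gap (rgt f) + (k (Inl (src f)) - k (Inl (tgt f)))))"
  using assms by (auto simp: in_tight_iff admissible_iff min_def)

lemma tight_cong: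
  assumes "\<And>u. u \<in> V \<Longrightarrow> k (Inl u) = k' (Inl u)" "\<And>f. f \<in> E \<Longrightarrow> k (Inr f) = k' (Inr f)"
  shows "tight k = tight k'"
proof -
  have "pairing coords k p = pairing coords k' p" for p by (rule pairing_cong) (use assms in auto)
  then show ?thesis by (simp add: tight_def)
qed

section \<open>Maximal cells\<close>

abbreviation "doubles S \<equiv> double_edges E src tgt S"

definition rooted :: "'e set \<Rightarrow> ('v,'e) pt set \<Rightarrow> bool" where
  "rooted D S \<longleftrightarrow> (\<forall>w\<in>V. \<exists>u. reachable src tgt D w u \<and> eV u \<in> S)"

lemma tight_in_cells: "admissible k \<Longrightarrow> tight k \<in> cells"
  by (auto simp: cells_eq)

lemma maximal_cellE:
  assumes "maximal_cell cells S"
  obtains k where "admissible k" "S = tight k"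
  using assms by (auto simp: maximal_cell_def cells_eq)

text \<open>Moving k in the direction z until a further point becomes tight.\<close>
lemma tight_strict_extension:
  assumes K: "admissible k" and z: "\<forall>p\<in>tight k. pairing coords z p = 0"
    and p0: "p0 \<in> points" "0 < pairing coords z p0"
  shows "\<exists>S'\<in>cells. tight k \<subset> S'"
proof -
  define Pos where "Pos = {p\<in>points. 0 < pairing coords z p}"
  define r where "r p = (gap p - pairing coords k p) / pairing coords z p" for p
  define \<epsilon> where "\<epsilon> = Min (r ` Pos)"
  define k' where "k' i = k i + \<epsilon> * z i" for i
  have finite_Pos: "finite Pos" using finite_points by (simp add: Pos_def)
  have "p0 \<in> Pos" using p0 by (simp add: Pos_def)
  have slack: "0 < gap p - pairing coords k p" if "p \<in> Pos" for p
  proof -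
    have "p \<notin> tight k" using that z by (auto simp: Pos_def)
    moreover have "pairing coords k p \<le> gap p" using K that by (auto simp: admissible_def Pos_def)
    ultimately show ?thesis using that by (auto simp: tight_def Pos_def)
  qed
  have "\<epsilon> \<in> r ` Pos" unfolding \<epsilon>_def using finite_Pos \<open>p0 \<in> Pos\<close> by (intro Min_in) auto
  then obtain ps where ps: "ps \<in> Pos" "\<epsilon> = r ps" by auto
  have "0 < \<epsilon>" using ps slack[OF ps(1)] by (simp add: r_def Pos_def)
  have pairing_k': "pairing coords k' p = pairing coords k p + \<epsilon> * pairing coords z p" for p
    unfolding k'_def by (rule pairing_add_scaled_form)
  have "admissible k'" unfolding admissible_def
  proof
    fix p assume p: "p \<in> points"
    show "pairing coords k' p \<le> gap p"
    proof (cases "0 < pairing coords z p")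
      case True
      then have "\<epsilon> \<le> r p" using p finite_Pos by (simp add: \<epsilon>_def Pos_def)
      then show ?thesis using True by (simp add: pairing_k' r_def pos_le_divide_eq)
    next
      case False
      then have "\<epsilon> * pairing coords z p \<le> 0" using \<open>0 < \<epsilon>\<close> by (simp add: mult_nonneg_nonpos)
      moreover have "pairing coords k p \<le> gap p" using K p by (simp add: admissible_def)
      ultimately show ?thesis by (simp add: pairing_k')
    qed
  qed
  moreover have "tight k \<subseteq> tight k'" using z by (auto simp: tight_def pairing_k')
  moreover have "ps \<in> tight k' - tight k"
    using ps slack[OF ps(1)] z by (auto simp: tight_def pairing_k' r_def Pos_def)
  ultimately show ?thesis using tight_in_cells by blast
qed

lemma maximal_cell_kernel:
  assumes M: "maximal_cell cells (tight k)" and K: "admissible k"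
    and z: "\<forall>p\<in>tight k. pairing coords z p = 0" and p: "p \<in> points"
  shows "pairing coords z p = 0"
proof (rule ccontr)
  assume nonzero: "pairing coords z p \<noteq> 0"
  have "\<exists>S'\<in>cells. tight k \<subset> S'"
  proof (cases "0 < pairing coords z p")
    case True then show ?thesis using tight_strict_extension[OF K z p] by blast
  next
    case False
    then have "0 < pairing coords (\<lambda>i. - z i) p" using nonzero by (simp add: pairing_uminus_form)
    moreover have "\<forall>q\<in>tight k. pairing coords (\<lambda>i. - z i) q = 0" using z by (simp add: pairing_uminus_form)
    ultimately show ?thesis using tight_strict_extension[OF K _ p] by blast
  qed
  then show False using M by (simp add: maximal_cell_def)
qed

lemma maximal_cell_covers_edge:
  assumes M: "maximal_cell cells (tight k)" and K: "admissible k" and f: "f \<in> E"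
  shows "eE f \<in> tight k \<or> til f \<in> tight k \<or> lft f \<in> tight k \<or> rgt f \<in> tight k"
proof (rule ccontr)
  assume uncovered: "\<not> ?thesis"
  define z :: "'v + 'e \<Rightarrow> real" where "z i = of_bool (i = Inr f)" for i
  have pairing_z: "pairing coords z p = p (Inr f)" for p
  proof -
    have "pairing coords z p = (\<Sum>i\<in>coords. if i = Inr f then p i else 0)"
      unfolding pairing_def z_def by (rule sum.cong) auto
    then show ?thesis using finite_coords f by simp
  qed
  have "\<forall>p\<in>tight k. pairing coords z p = 0"
  proof
    fix p assume p: "p \<in> tight k"
    with tight_subset_points have "p \<in> points" by blast
    then show "pairing coords z p = 0"
      by (cases rule: points_cases)
        (use uncovered p in \<open>auto simp: pairing_z eV_apply eE_apply eTil_def eLeft_def eRight_def\<close>)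
  qed
  from maximal_cell_kernel[OF M K this in_points(2)[OF f]] show False
    by (simp add: pairing_z eE_apply)
qed

text \<open>A vertex function that vanishes at the tight vertices and is constant along the double
  edges extends to a linear form vanishing on the cell: each edge coordinate is chosen to
  annihilate the (essentially unique) tight point of that edge.\<close>
lemma vertex_function_extends_to_kernel:
  assumes K: "admissible k" and x0: "\<forall>u\<in>V. eV u \<in> tight k \<longrightarrow> x u = 0"
    and x_const: "\<forall>f\<in>doubles (tight k). x (src f) = x (tgt f)"
  shows "\<exists>z. (\<forall>u. z (Inl u) = x u) \<and> (\<forall>p\<in>tight k. pairing coords z p = 0)"
proof -
  let ?S = "tight k"
  define y where "y f = (if til f \<in> ?S then x (src f) + x (tgt f) else if eE f \<in> ?S then 0
      else if lft f \<in> ?S then x (tgt f) - x (src f) else x (src f) - x (tgt f))" for f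
  have x_double: "x (src f) = x (tgt f)" if "f \<in> E" "eE f \<in> ?S" "lft f \<in> ?S \<or> rgt f \<in> ?S" for f
    using that x_const double_edgesI[of f E src tgt ?S] by (cases "src f = tgt f") auto
  have "pairing coords (case_sum x y) p = 0" if p: "p \<in> ?S" for p
  proof -
    from p tight_subset_points have "p \<in> points" by blast
    then show ?thesis
    proof (cases rule: points_cases)
      case (1 u) then show ?thesis using x0 p by (simp add: pairing_eV)
    next
      case (2 f) then show ?thesis using tight_exclusions(1)[OF K] p by (simp add: pairing_eE y_def)
    next
      case (3 f) then show ?thesis using p by (simp add: pairing_eTil y_def)
    next
      case (4 f)
      then show ?thesis using tight_exclusions(2)[OF K] x_double p by (auto simp: pairing_eLeft y_def)
    next
      case (5 f)
      have "lft f \<notin> ?S" if "eE f \<notin> ?S"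
        using that tight_exclusions(4)[OF K 5(1)] p 5(2) eLeft_loop[of src f tgt]
        by (cases "src f = tgt f") auto
      then show ?thesis
        using 5 tight_exclusions(3)[OF K] x_double p by (auto simp: pairing_eRight y_def)
    qed
  qed
  then show ?thesis by (intro exI[of _ "case_sum x y"]) simp
qed

lemma maximal_cell_rooted:
  assumes M: "maximal_cell cells (tight k)" and K: "admissible k"
  shows "rooted (doubles (tight k)) (tight k)"
  unfolding rooted_def
proof (rule ballI, rule ccontr)
  fix w assume w: "w \<in> V" and unrooted: "\<nexists>u. reachable src tgt (doubles (tight k)) w u \<and> eV u \<in> tight k"
  define x :: "'v \<Rightarrow> real" where "x u = of_bool (reachable src tgt (doubles (tight k)) w u)" for u
  have "\<forall>f\<in>doubles (tight k). x (src f) = x (tgt f)"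
    unfolding x_def using reachable_via_edge_iff[of _ "doubles (tight k)" src tgt w] by simp
  moreover have "\<forall>u\<in>V. eV u \<in> tight k \<longrightarrow> x u = 0" using unrooted by (auto simp: x_def)
  ultimately obtain z where z: "\<forall>u. z (Inl u) = x u" "\<forall>p\<in>tight k. pairing coords z p = 0"
    using vertex_function_extends_to_kernel[OF K] by blast
  from maximal_cell_kernel[OF M K z(2) in_points(1)[OF w]] show False
    using z(1) w by (simp add: pairing_eV x_def)
qed

lemma cell_finite: "S \<in> cells \<Longrightarrow> finite S"
  using cells_aff_indep by (simp add: aff_indep_def)

lemma cell_doubles_acyclic:
  assumes S: "S \<in> cells"
  shows "\<not> has_cycle src tgt (doubles S)"
proof
  assume "has_cycle src tgt (doubles S)"
  then obtain vs es where W: "walk src tgt (doubles S) vs es" "es \<noteq> []" "distinct es"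
    "vs ! length es = vs ! 0"
    by (rule has_cycle_closed_walk)
  obtain c where c: "(\<Sum>p\<in>S. c p) = 0" "\<forall>j. (\<Sum>p\<in>S. c p * p j) = 0" "c (eE (es ! 0)) \<noteq> 0"
    using walk_affine_dependence[OF cell_finite[OF S] W(1)] W(2-4) by auto
  moreover have "es ! 0 \<in> doubles S" using W(1,2) nth_mem[of 0 es] by (auto simp: walk_def)
  then have "eE (es ! 0) \<in> S" by (simp add: double_edgesD)
  ultimately show False using cells_aff_indep[OF S] unfolding aff_indep_def by blast
qed

lemma cell_tight_vertices_disconnected:
  assumes S: "S \<in> cells" and u: "eV u \<in> S" and w: "eV w \<in> S"
    and "reachable src tgt (doubles S) u w"
  shows "u = w"
proof (rule ccontr)
  assume "u \<noteq> w"
  obtain vs es where W: "walk src tgt (doubles S) vs es" "vs ! 0 = u" "vs ! length es = w"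
    using reachable_imp_path[OF assms(4)] by blast
  obtain c where c: "(\<Sum>p\<in>S. c p) = 0" "\<forall>j. (\<Sum>p\<in>S. c p * p j) = eV u j - eV w j"
    "\<forall>v. c (eV v) = 0"
    using walk_affine_dependence[OF cell_finite[OF S] W(1)] W(2,3) by auto
  define c' where "c' p = c p + 1 * (of_bool (p = eV w) - of_bool (p = eV u))" for p
  note move = sums_move_coefficient[OF cell_finite[OF S] w u, of c 1, folded c'_def]
  have "(\<Sum>p\<in>S. c' p) = 0" "\<forall>j. (\<Sum>p\<in>S. c' p * p j) = 0"
    using move(1) move(2)[of "\<lambda>p. p"] c(1,2) by simp_all
  moreover have "c' (eV u) \<noteq> 0" using c(3) \<open>u \<noteq> w\<close> by (simp add: c'_def eV_inject)
  ultimately show False using cells_aff_indep[OF S] u unfolding aff_indep_def by blast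
qed

lemma doubles_subset_if_rooted:
  assumes S: "S \<in> cells" and D: "D \<subseteq> doubles S" and roots: "rooted D S"
  shows "doubles S \<subseteq> D"
proof
  fix f assume f: "f \<in> doubles S"
  then have "f \<in> E" by (simp add: double_edgesD)
  show "f \<in> D"
  proof (rule ccontr)
    assume "f \<notin> D"
    obtain r1 r2 where r: "reachable src tgt D (src f) r1" "eV r1 \<in> S"
      "reachable src tgt D (tgt f) r2" "eV r2 \<in> S"
      using roots ends_in_V[OF \<open>f \<in> E\<close>] unfolding rooted_def by blast
    have "reachable src tgt (doubles S) r1 (src f)" "reachable src tgt (doubles S) (tgt f) r2"
      using reachable_mono[OF D reachable_sym[OF r(1)]] reachable_mono[OF D r(3)] .
    with reachable_edge[OF f] have "reachable src tgt (doubles S) r1 r2"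
      by (meson rtranclp_trans)
    then have "r1 = r2" using cell_tight_vertices_disconnected[OF S r(2,4)] by blast
    then have "reachable src tgt D (tgt f) (src f)"
      using r(3) reachable_sym[OF r(1)] by (meson rtranclp_trans)
    then have "has_cycle src tgt (insert f D)" using has_cycle_insert[OF \<open>f \<notin> D\<close>] by blast
    then have "has_cycle src tgt (doubles S)" using has_cycle_mono[of "insert f D"] D f by blast
    then show False using cell_doubles_acyclic[OF S] by blast
  qed
qed

section \<open>Uniqueness and existence\<close>

text \<open>k - k' is constant along D and has opposite signs at the two tight vertices of a
  component, so the vertex coordinates agree; each edge coordinate is then fixed by the
  squiggly point or by edge_coord_eq_min.\<close>
lemma tight_eq_if_same_pattern:
  assumes K: "admissible k" "admissible k'"
    and D: "\<forall>f\<in>D. f \<in> E \<and> eE f \<in> tight k \<inter> tight k' \<and>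
      (lft f \<in> tight k \<inter> tight k' \<or> rgt f \<in> tight k \<inter> tight k')"
    and roots: "rooted D (tight k)" "rooted D (tight k')"
    and edges: "\<forall>f\<in>E. til f \<in> tight k \<inter> tight k' \<or>
      (eE f \<in> tight k \<or> lft f \<in> tight k \<or> rgt f \<in> tight k) \<and>
      (eE f \<in> tight k' \<or> lft f \<in> tight k' \<or> rgt f \<in> tight k')"
  shows "tight k = tight k'"
proof -
  define g where "g u = k (Inl u) - k' (Inl u)" for u
  have g_const: "\<forall>f\<in>D. g (src f) = g (tgt f)"
    using D by (auto simp: g_def in_tight_iff)
  have D_in_V: "\<forall>f\<in>D. src f \<in> V \<and> tgt f \<in> V" using D ends_in_V by blast
  have vertex_eq: "k (Inl w) = k' (Inl w)" if w: "w \<in> V" for w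
  proof -
    obtain u u' where u: "reachable src tgt D w u" "eV u \<in> tight k"
      and u': "reachable src tgt D w u'" "eV u' \<in> tight k'"
      using roots w by (meson rooted_def)
    have "u \<in> V" "u' \<in> V" using reachable_closed[OF D_in_V _ w] u(1) u'(1) by blast+
    then have "0 \<le> g u" "g u' \<le> 0" using u(2) u'(2) K by (auto simp: g_def in_tight_iff admissible_iff)
    moreover have "g w = g u" "g w = g u'" using reachable_const[of D g src tgt, OF g_const] u(1) u'(1) by blast+
    ultimately show ?thesis by (simp add: g_def)
  qed
  have edge_eq: "k (Inr f) = k' (Inr f)" if f: "f \<in> E" for f
    using edges f vertex_eq ends_in_V[OF f] edge_coord_eq_min[OF K(1) f] edge_coord_eq_min[OF K(2) f]
    by (auto simp: in_tight_iff)
  show ?thesis using tight_cong vertex_eq edge_eq by blast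
qed

lemma maximal_cell_unique:
  assumes M: "maximal_cell cells S1" "maximal_cell cells S2"
    and sq: "squiggly E src tgt S1 = squiggly E src tgt S2"
    and D: "doubles S1 = D" "doubles S2 = D"
    and p: "\<forall>f\<in>D. p f \<in> {lft f, rgt f} \<and> p f \<in> S1 \<inter> S2"
  shows "S1 = S2"
proof -
  obtain k1 k2 where K: "admissible k1" "admissible k2" and S: "S1 = tight k1" "S2 = tight k2"
    using M by (meson maximal_cellE)
  have "\<forall>f\<in>D. f \<in> E \<and> eE f \<in> S1 \<inter> S2 \<and> (lft f \<in> S1 \<inter> S2 \<or> rgt f \<in> S1 \<inter> S2)"
    using p D double_edgesD[of _ E src tgt S1] double_edgesD[of _ E src tgt S2] by auto
  moreover have "rooted D S1" "rooted D S2"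
    using maximal_cell_rooted[of k1] maximal_cell_rooted[of k2] M K S D by simp_all
  moreover have "til f \<in> S1 \<inter> S2 \<or>
      (eE f \<in> S1 \<or> lft f \<in> S1 \<or> rgt f \<in> S1) \<and> (eE f \<in> S2 \<or> lft f \<in> S2 \<or> rgt f \<in> S2)"
    if f: "f \<in> E" for f
  proof (cases "til f \<in> S1")
    case True
    then have "til f \<in> S2" using sq f by (auto simp: squiggly_def)
    with True show ?thesis by blast
  next
    case False
    then have "til f \<notin> S2" using sq f by (auto simp: squiggly_def)
    with False show ?thesis
      using maximal_cell_covers_edge[of k1 f] maximal_cell_covers_edge[of k2 f] M K S f by auto
  qed
  ultimately show ?thesis using tight_eq_if_same_pattern[OF K, of D] S by blast
qed

lemma maximal_cell_if_rooted:
  assumes K: "admissible k"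
    and D: "\<forall>f\<in>D. f \<in> E \<and> eE f \<in> tight k \<and> (lft f \<in> tight k \<or> rgt f \<in> tight k)"
    and roots: "rooted D (tight k)"
    and edges: "\<forall>f\<in>E. til f \<in> tight k \<or> eE f \<in> tight k \<or> lft f \<in> tight k \<or> rgt f \<in> tight k"
  shows "maximal_cell cells (tight k)"
  unfolding maximal_cell_def
proof (intro conjI notI tight_in_cells[OF K])
  assume "\<exists>S'\<in>cells. tight k \<subset> S'"
  then obtain k' where K': "admissible k'" and sub: "tight k \<subset> tight k'" by (auto simp: cells_eq)
  have "\<forall>f\<in>D. f \<in> E \<and> eE f \<in> tight k \<inter> tight k' \<and>
      (lft f \<in> tight k \<inter> tight k' \<or> rgt f \<in> tight k \<inter> tight k')"
    using D sub by blast
  moreover have "rooted D (tight k')" using roots sub unfolding rooted_def by blast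
  moreover have "\<forall>f\<in>E. til f \<in> tight k \<inter> tight k' \<or>
      (eE f \<in> tight k \<or> lft f \<in> tight k \<or> rgt f \<in> tight k) \<and>
      (eE f \<in> tight k' \<or> lft f \<in> tight k' \<or> rgt f \<in> tight k')"
    using edges sub by blast
  ultimately have "tight k = tight k'" using tight_eq_if_same_pattern[OF K K' _ roots] by blast
  with sub show False by simp
qed

text \<open>The edges of E1 get the value that makes their squiggly point tight; every other edge
  gets the largest admissible value, which makes eE f, the left or the right point tight.\<close>
definition canonical_form :: "'e set \<Rightarrow> ('v \<Rightarrow> real) \<Rightarrow> 'v + 'e \<Rightarrow> real" where
  "canonical_form E1 \<alpha> = case_sum \<alpha> (\<lambda>f. if f \<in> E1 then \<alpha> (src f) + \<alpha> (tgt f) - gap (til f)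
     else min 0 (min (gap (lft f) - (\<alpha> (src f) - \<alpha> (tgt f))) (gap (rgt f) + (\<alpha> (src f) - \<alpha> (tgt f)))))"

context
  fixes E1 :: "'e set" and \<alpha> :: "'v \<Rightarrow> real"
  assumes nonpos: "\<forall>u\<in>V. \<alpha> u \<le> 0"
begin

lemma edge_bounds:
  assumes "f \<in> E"
  shows "\<alpha> (src f) \<le> 0" "\<alpha> (tgt f) \<le> 0" "0 < gap (til f)" "0 \<le> gap (lft f)" "0 \<le> gap (rgt f)"
  using nonpos ends_in_V[OF assms] gap_eTil_pos[OF assms] gap_nonneg[OF in_points(4)[OF assms]]
    gap_nonneg[OF in_points(5)[OF assms]] by auto

lemma canonical_form_admissible: "admissible (canonical_form E1 \<alpha>)"
proof -
  have "canonical_form E1 \<alpha> (Inr f) \<le> 0 \<and>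
      \<alpha> (src f) + \<alpha> (tgt f) - canonical_form E1 \<alpha> (Inr f) \<le> gap (til f) \<and>
      \<alpha> (src f) - \<alpha> (tgt f) + canonical_form E1 \<alpha> (Inr f) \<le> gap (lft f) \<and>
      - \<alpha> (src f) + \<alpha> (tgt f) + canonical_form E1 \<alpha> (Inr f) \<le> gap (rgt f)" if "f \<in> E" for f
    using edge_bounds[OF that] by (auto simp: canonical_form_def min_def)
  then show ?thesis using nonpos by (simp add: admissible_iff canonical_form_def)
qed

lemma eTil_tight_canonical_form_iff:
  assumes "f \<in> E" shows "til f \<in> tight (canonical_form E1 \<alpha>) \<longleftrightarrow> f \<in> E1"
  using assms edge_bounds[OF assms] by (auto simp: in_tight_iff canonical_form_def min_def)

lemma canonical_form_covers_edge:
  assumes "f \<in> E" "f \<notin> E1"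
  shows "eE f \<in> tight (canonical_form E1 \<alpha>) \<or> lft f \<in> tight (canonical_form E1 \<alpha>) \<or>
    rgt f \<in> tight (canonical_form E1 \<alpha>)"
  using assms by (auto simp: in_tight_iff canonical_form_def min_def)

lemma canonical_form_tight_arrow:
  assumes "f \<in> E" "f \<notin> E1" "q \<in> {lft f, rgt f}"
    and "\<alpha> (src f) - \<alpha> (tgt f) = (if q = lft f then gap (lft f) else - gap (rgt f))"
  shows "eE f \<in> tight (canonical_form E1 \<alpha>) \<and> q \<in> tight (canonical_form E1 \<alpha>)"
  using assms edge_bounds[OF assms(1)]
  by (auto simp: in_tight_iff canonical_form_def min_def split: if_splits)

end

text \<open>The vertex values come from a potential on the forest D whose differences force the
  chosen arrow point p f to be tight.\<close>
lemma maximal_cell_exists: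
  assumes E1: "E1 \<subseteq> E" and D: "D \<subseteq> E" "E1 \<inter> D = {}" and acyclic: "\<not> has_cycle src tgt D"
    and p: "\<forall>f\<in>D. p f \<in> {lft f, rgt f}"
  shows "\<exists>S. maximal_cell cells S \<and> squiggly E src tgt S = E1 \<and> doubles S = D \<and> (\<forall>f\<in>D. p f \<in> S)"
proof -
  define w where "w f = (if p f = lft f then gap (lft f) else - gap (rgt f))" for f
  obtain \<alpha> where \<alpha>: "\<forall>f\<in>D. \<alpha> (src f) - \<alpha> (tgt f) = w f" "\<forall>x\<in>V. \<alpha> x \<le> 0"
    "\<forall>x\<in>V. \<exists>u\<in>V. reachable src tgt D x u \<and> \<alpha> u = 0"
    using acyclic_normalized_potential[where w = w, OF finite_V finite_subset[OF D(1) finite_E] acyclic]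
      D(1) ends_in_V by blast
  define k where "k = canonical_form E1 \<alpha>"
  have K: "admissible k" using canonical_form_admissible \<alpha>(2) by (simp add: k_def)
  have D_tight: "f \<in> E \<and> eE f \<in> tight k \<and> p f \<in> tight k" if "f \<in> D" for f
    using canonical_form_tight_arrow[OF \<alpha>(2), of f E1 "p f"] \<alpha>(1) p D that by (auto simp: k_def w_def)
  then have D_arrows: "\<forall>f\<in>D. f \<in> E \<and> eE f \<in> tight k \<and> (lft f \<in> tight k \<or> rgt f \<in> tight k)"
    using p by fastforce
  have roots: "rooted D (tight k)"
    using \<alpha>(3) by (fastforce simp: rooted_def k_def canonical_form_def in_tight_iff)
  have "\<forall>f\<in>E. til f \<in> tight k \<or> eE f \<in> tight k \<or> lft f \<in> tight k \<or> rgt f \<in> tight k"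
    using eTil_tight_canonical_form_iff[OF \<alpha>(2)] canonical_form_covers_edge[OF \<alpha>(2)] by (auto simp: k_def)
  then have max: "maximal_cell cells (tight k)" by (rule maximal_cell_if_rooted[OF K D_arrows roots])
  have sq: "squiggly E src tgt (tight k) = E1"
    using eTil_tight_canonical_form_iff[OF \<alpha>(2)] E1 by (auto simp: squiggly_def k_def)
  have "D \<subseteq> doubles (tight k)"
    using D_arrows acyclic_no_loop[OF acyclic] by (auto intro: double_edgesI)
  moreover have "doubles (tight k) \<subseteq> D"
    by (rule doubles_subset_if_rooted[OF tight_in_cells[OF K] calculation roots])
  ultimately show ?thesis using max sq D_tight by blast
qed

end

theorem mainTheorem6:
  fixes V :: "'v set" and E :: "'e set" and src tgt :: "'e \<Rightarrow> 'v"
    and T :: "('v,'e) pt set set" and E1 D :: "'e set" and p :: "'e \<Rightarrow> ('v,'e) pt"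
  assumes "finite V" and "finite E"
    and "\<forall>f\<in>E. src f \<in> V \<and> tgt f \<in> V"
    and "good_triangulation V E src tgt T"
    and "E1 \<subseteq> E" and "D \<subseteq> E" and "E1 \<inter> D = {}"
    and "\<not> has_cycle src tgt D"
    and "\<forall>f\<in>D. p f \<in> {eLeft src tgt f, eRight src tgt f}"
  shows "(\<exists>!S. maximal_cell T S \<and> squiggly E src tgt S = E1 \<and> double_edges E src tgt S = D
              \<and> (\<forall>f\<in>D. p f \<in> S))
         \<and> (\<forall>S. maximal_cell T S \<longrightarrow> \<not> has_cycle src tgt (double_edges E src tgt S))"
proof -
  obtain h where T: "T = regular_subdivision V E (cosmo_points V E src tgt) h"
    and indep: "\<forall>S\<in>T. aff_indep S" and standard: "maximal_cell T (eV ` V \<union> eE ` E)"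
    using assms(4) unfolding good_triangulation_def by blast
  have "eV ` V \<union> eE ` E \<in> regular_subdivision V E (cosmo_points V E src tgt) h"
    using standard T by (simp add: maximal_cell_def)
  then obtain c d where
    "\<forall>p\<in>cosmo_points V E src tgt. pairing (Inl ` V \<union> Inr ` E) c p + d \<le> h p"
    "eV ` V \<union> eE ` E = {p\<in>cosmo_points V E src tgt. pairing (Inl ` V \<union> Inr ` E) c p + d = h p}"
    unfolding regular_subdivision_def pairing_def by blast
  then interpret good_height V E src tgt h c d
    using assms(1-3) indep T by unfold_locales auto
  have "S1 = S2" if "maximal_cell T S1 \<and> squiggly E src tgt S1 = E1 \<and> doubles S1 = D \<and> (\<forall>f\<in>D. p f \<in> S1)"
    and "maximal_cell T S2 \<and> squiggly E src tgt S2 = E1 \<and> doubles S2 = D \<and> (\<forall>f\<in>D. p f \<in> S2)" for S1 S2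
    using maximal_cell_unique[of S1 S2 D p] that assms(9) T by auto
  then show ?thesis
    using maximal_cell_exists[OF assms(5-9)] cell_doubles_acyclic T
    by (auto simp: maximal_cell_def)
qed

end
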